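(* For all $M>0$, all $\alpha>0$, all $q$ with $|q|<1$ and all $\epsilon>0$ there exist constants $C_1,C_2>0$ such that for all $p$ with $|p|<|q|$, \[ C_1\le|(zp^{-\alpha};q)|\,|z|^{-k\alpha}\,|q|^{\binom{k\alpha+1}{2}}\le C_2 \] for all $z$ with $1/M<|z|<M$ and $|1-z/w|>\epsilon$ for every zero $w$ of $z\mapsto(zp^{-\alpha};q)$ and of $z\mapsto(qp^\alpha/z;q)$, where $p=xq^k$ with $|x|=1$ and $k\in\mathbb{R}$.
   Context: $(y;q)=\prod_{r\ge0}(1-yq^r)$. For real $y$, $\binom{y}{2}=y(y-1)/2$. The paper phrases the condition on $z$ as "$z$ away from the zeros". *)

theory Defs
  imports "HOL-Analysis.Analysis"
begin

definition qpoch :: "complex \<Rightarrow> complex \<Rightarrow> complex" where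
  "qpoch y q = (\<Prod>r. 1 - y * q ^ r)"

definition binom2 :: "real \<Rightarrow> real" where
  "binom2 y = y * (y - 1) / 2"

definition zeroset :: "complex \<Rightarrow> real \<Rightarrow> complex \<Rightarrow> complex set" where
  "zeroset p \<alpha> q =
     {w. w \<noteq> 0 \<and> qpoch (w * p powr (-\<alpha>)) q = 0} \<union>
     {w. w \<noteq> 0 \<and> qpoch (q * p powr \<alpha> / w) q = 0}"

end

theory Submission
  imports Defs
begin

text \<open>
  Put y = z p^(-\<alpha>) and K = k\<alpha>, so that |y q^i| = |z| |q|^(i - K), where K > 0 because |p| < |q|
  forces k > 1. Split the product (y;q) at n = \<lceil>K\<rceil>. For i \<ge> n the factor 1 - y q^i is
  1 + O(|q|^(i - n)); for i < n write 1 - y q^i = - y q^i (1 - (y q^i)^(-1)), whose second factor is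
  1 + O(|q|^(n - 1 - i)). Both products of near-1 factors lie between positive constants: geometric
  decay bounds them above and bounds all but a fixed number R = R(M, |q|) of their factors below,
  and those R factors are kept away from 0 by the distance of z from the zeros. The remaining monomial, the product of the |y q^i|
  for i < n, equals |z|^K |q|^(-binom2 (K + 1)) times |z|^t |q|^((t^2 - t)/2) with t = n - K in [0,1),
  and the last factor is bounded above and below.
\<close>

lemma exp_minus_two_mult_le_one_minus:
  fixes x :: real
  assumes "0 \<le> x" "x \<le> 1/2"
  shows "exp (-2 * x) \<le> 1 - x"
proof -
  have "x * (2 * x) \<le> x * 1"
    using assms by (intro mult_left_mono) auto
  then have "-2 * x \<le> - x - 2 * x\<^sup>2"
    by (simp add: power2_eq_square algebra_simps)
  also have "\<dots> \<le> ln (1 - x)"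
    using assms by (rule ln_one_minus_pos_lower_bound)
  finally have "exp (-2 * x) \<le> exp (ln (1 - x))"
    by simp
  with assms show ?thesis
    by simp
qed

lemma sum_power_inj_on_le_geometric:
  fixes a :: real
  assumes "0 \<le> a" "a < 1" "finite S" "inj_on h S"
  shows "(\<Sum>s\<in>S. a ^ h s) \<le> 1 / (1 - a)"
proof -
  have "(\<Sum>s\<in>S. a ^ h s) = (\<Sum>j\<in>h ` S. a ^ j)"
    using assms by (simp add: sum.reindex)
  also have "\<dots> \<le> (\<Sum>j. a ^ j)"
    using assms by (intro sum_le_suminf) (auto intro: summable_geometric)
  also have "\<dots> = 1 / (1 - a)"
    using assms by (simp add: suminf_geometric)
  finally show ?thesis .
qed

lemma prod_norm_one_minus_le_exp:
  fixes v :: "'i \<Rightarrow> 'a::real_normed_algebra_1"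
  assumes a: "0 \<le> a" "a < 1" and B: "0 \<le> B" and S: "finite S" "inj_on h S"
    and v: "\<And>s. s \<in> S \<Longrightarrow> norm (v s) \<le> B * a ^ h s"
  shows "(\<Prod>s\<in>S. norm (1 - v s)) \<le> exp (B / (1 - a))"
proof -
  have "(\<Prod>s\<in>S. norm (1 - v s)) \<le> (\<Prod>s\<in>S. exp (B * a ^ h s))"
  proof (intro prod_mono conjI)
    fix s assume "s \<in> S"
    have "norm (1 - v s) \<le> 1 + norm (v s)"
      by (metis norm_one norm_triangle_ineq4)
    also have "\<dots> \<le> exp (B * a ^ h s)"
      using v[OF \<open>s \<in> S\<close>] exp_ge_add_one_self[of "norm (v s)"] by (meson exp_le_cancel_iff order_trans)
    finally show "norm (1 - v s) \<le> exp (B * a ^ h s)" .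
  qed simp
  also have "\<dots> = exp (B * (\<Sum>s\<in>S. a ^ h s))"
    using S by (simp add: exp_sum sum_distrib_left)
  also have "\<dots> \<le> exp (B / (1 - a))"
    using sum_power_inj_on_le_geometric[OF a S] B by (simp add: mult_left_mono[of _ _ B, simplified] divide_inverse)
  finally show ?thesis .
qed

lemma prod_norm_one_minus_ge_exp:
  fixes v :: "'i \<Rightarrow> 'a::real_normed_algebra_1"
  assumes a: "0 \<le> a" "a < 1" and B: "0 \<le> B" and S: "finite S" "inj_on h S"
    and v: "\<And>s. s \<in> S \<Longrightarrow> norm (v s) \<le> B * a ^ h s"
    and small: "\<And>s. s \<in> S \<Longrightarrow> B * a ^ h s \<le> 1/2"
  shows "exp (-2 * B / (1 - a)) \<le> (\<Prod>s\<in>S. norm (1 - v s))"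
proof -
  have "exp (-2 * B / (1 - a)) \<le> exp (-2 * (B * (\<Sum>s\<in>S. a ^ h s)))"
    using sum_power_inj_on_le_geometric[OF a S] B mult_left_mono by (fastforce simp: divide_inverse)
  also have "\<dots> = (\<Prod>s\<in>S. exp (-2 * (B * a ^ h s)))"
    using S by (simp add: exp_sum sum_distrib_left)
  also have "\<dots> \<le> (\<Prod>s\<in>S. norm (1 - v s))"
  proof (intro prod_mono conjI)
    fix s assume s: "s \<in> S"
    have "exp (-2 * (B * a ^ h s)) \<le> exp (-2 * norm (v s))"
      using v[OF s] by simp
    also have "\<dots> \<le> 1 - norm (v s)"
      using v[OF s] small[OF s] by (intro exp_minus_two_mult_le_one_minus) auto
    also have "\<dots> \<le> norm (1 - v s)"
      by (metis norm_one norm_triangle_ineq2)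
    finally show "exp (-2 * (B * a ^ h s)) \<le> norm (1 - v s)" .
  qed simp
  finally show ?thesis .
qed

lemma prod_norm_one_minus_ge:
  fixes v :: "'i \<Rightarrow> 'a::real_normed_algebra_1"
  assumes a: "0 \<le> a" "a < 1" and B: "0 \<le> B" and S: "finite S" "inj_on h S"
    and v: "\<And>s. s \<in> S \<Longrightarrow> norm (v s) \<le> B * a ^ h s"
    and R: "B * a ^ R \<le> 1/2"
    and \<delta>: "0 < \<delta>" "\<delta> \<le> 1" and sep: "\<And>s. s \<in> S \<Longrightarrow> h s < R \<Longrightarrow> \<delta> \<le> norm (1 - v s)"
  shows "exp (-2 * B / (1 - a)) * \<delta> ^ R \<le> (\<Prod>s\<in>S. norm (1 - v s))"
proof -
  define S1 where "S1 = {s\<in>S. h s < R}"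
  define S2 where "S2 = {s\<in>S. R \<le> h s}"
  have "\<delta> ^ R \<le> \<delta> ^ card S1"
  proof (rule power_decreasing)
    have "card S1 = card (h ` S1)"
      using S by (intro card_image[symmetric]) (auto simp: S1_def intro: inj_on_subset)
    also have "\<dots> \<le> card {..<R}"
      by (intro card_mono) (auto simp: S1_def)
    finally show "card S1 \<le> R" by simp
  qed (use \<delta> in auto)
  also have "\<dots> \<le> (\<Prod>s\<in>S1. norm (1 - v s))"
    using sep prod_mono[of S1 "\<lambda>_. \<delta>"] \<delta> by (auto simp: S1_def)
  finally have P1: "\<delta> ^ R \<le> (\<Prod>s\<in>S1. norm (1 - v s))" .
  have "B * a ^ h s \<le> 1/2" if "s \<in> S2" for s
  proof -
    have "B * a ^ h s \<le> B * a ^ R"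
      using that a B by (intro mult_left_mono power_decreasing) (auto simp: S2_def)
    with R show ?thesis by linarith
  qed
  then have P2: "exp (-2 * B / (1 - a)) \<le> (\<Prod>s\<in>S2. norm (1 - v s))"
    using S v by (intro prod_norm_one_minus_ge_exp[OF a B]) (auto simp: S2_def intro: inj_on_subset)
  have "exp (-2 * B / (1 - a)) * \<delta> ^ R \<le> (\<Prod>s\<in>S2. norm (1 - v s)) * (\<Prod>s\<in>S1. norm (1 - v s))"
    using P1 P2 \<delta> by (intro mult_mono) (auto intro: prod_nonneg)
  also have "\<dots> = (\<Prod>s\<in>S. norm (1 - v s))"
    using S by (subst prod.union_disjoint[symmetric]) (auto simp: S1_def S2_def intro: prod.cong)
  finally show ?thesis .
qed


lemma convergent_prod_qpoch:
  fixes c q :: complex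
  assumes "norm q < 1"
  shows "convergent_prod (\<lambda>r. 1 - c * q ^ r)"
proof -
  have "summable (\<lambda>r. norm c * norm q ^ r)"
    using assms by (intro summable_mult summable_geometric) simp
  then have "summable (\<lambda>r. norm ((1 - c * q ^ r) - 1))"
    by (simp add: norm_mult norm_power)
  then show ?thesis
    by (intro abs_convergent_prod_imp_convergent_prod summable_imp_abs_convergent_prod)
qed

lemma qpoch_eq_0:
  assumes "norm q < 1" "c * q ^ r = 1"
  shows "qpoch c q = 0"
  unfolding qpoch_def
  using assms by (intro has_prod_zeroI[OF convergent_prod_has_prod[OF convergent_prod_qpoch], of q c r]) auto

lemma norm_qpoch_bounds_of_tail_bounds:
  assumes q: "norm q < 1"
    and tail: "\<And>m. n \<le> m \<Longrightarrow> L \<le> (\<Prod>i\<in>{n..m}. norm (1 - c * q ^ i)) \<and> (\<Prod>i\<in>{n..m}. norm (1 - c * q ^ i)) \<le> U"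
  shows "(\<Prod>i<n. norm (1 - c * q ^ i)) * L \<le> norm (qpoch c q)"
    and "norm (qpoch c q) \<le> (\<Prod>i<n. norm (1 - c * q ^ i)) * U"
proof -
  define H where "H = (\<Prod>i<n. norm (1 - c * q ^ i))"
  have "(\<lambda>m. \<Prod>i\<le>m. 1 - c * q ^ i) \<longlonglongrightarrow> qpoch c q"
    unfolding qpoch_def by (rule convergent_prod_LIMSEQ[OF convergent_prod_qpoch[OF q]])
  from tendsto_norm[OF this]
  have lim: "(\<lambda>m. \<Prod>i\<le>m. norm (1 - c * q ^ i)) \<longlonglongrightarrow> norm (qpoch c q)"
    by (simp add: prod_norm)
  have split: "(\<Prod>i\<le>m. norm (1 - c * q ^ i)) = H * (\<Prod>i\<in>{n..m}. norm (1 - c * q ^ i))" if "n \<le> m" for m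
  proof -
    have "{..m} = {..<n} \<union> {n..m}"
      using that by auto
    then show ?thesis
      by (simp add: H_def prod.union_disjoint ivl_disj_int)
  qed
  have H: "0 \<le> H"
    by (simp add: H_def prod_nonneg)
  show "H * L \<le> norm (qpoch c q)"
    using tail H by (intro tendsto_lowerbound[OF lim] eventually_sequentiallyI[of n])
      (auto simp: split intro: mult_left_mono)
  show "norm (qpoch c q) \<le> H * U"
    using tail H by (intro tendsto_upperbound[OF lim] eventually_sequentiallyI[of n])
      (auto simp: split intro: mult_left_mono)
qed

lemma norm_one_minus_eq_norm_mult_norm_one_minus_inverse:
  fixes w :: "'a::real_normed_field"
  assumes "w \<noteq> 0"
  shows "norm (1 - w) = norm w * norm (1 - inverse w)"
proof -
  have "w * (1 - inverse w) = - (1 - w)"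
    using assms by (simp add: algebra_simps)
  then show ?thesis
    by (metis norm_minus_cancel norm_mult)
qed

lemma powr_between_one_and_base:
  fixes \<rho> t :: real
  assumes "0 < \<rho>" "0 \<le> t" "t \<le> 1"
  shows "min 1 \<rho> \<le> \<rho> powr t" and "\<rho> powr t \<le> max 1 \<rho>"
proof -
  have "min 1 \<rho> \<le> \<rho> powr t \<and> \<rho> powr t \<le> max 1 \<rho>"
  proof (cases "1 \<le> \<rho>")
    case True
    then have "\<rho> powr 0 \<le> \<rho> powr t" "\<rho> powr t \<le> \<rho> powr 1"
      using assms powr_mono[of 0 t \<rho>] powr_mono[of t 1 \<rho>] by auto
    then show ?thesis using assms by auto
  next
    case False
    then have "\<rho> powr t \<le> \<rho> powr 0" "\<rho> powr 1 \<le> \<rho> powr t"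
      using assms powr_mono'[of 0 t \<rho>] powr_mono'[of t 1 \<rho>] by auto
    then show ?thesis using assms by auto
  qed
  then show "min 1 \<rho> \<le> \<rho> powr t" "\<rho> powr t \<le> max 1 \<rho>" by auto
qed

lemma powr_quadratic_exponent_bounds:
  fixes a t :: real
  assumes "0 < a" "a < 1" "0 \<le> t" "t \<le> 1"
  shows "1 \<le> a powr ((t\<^sup>2 - t) / 2)" and "a powr ((t\<^sup>2 - t) / 2) \<le> 1 / a"
proof -
  have "t * t \<le> t"
    using assms by (simp add: mult_left_le)
  moreover have "-1 \<le> t * t - t"
    using \<open>t \<le> 1\<close> zero_le_square[of t] by linarith
  ultimately have e: "-1 \<le> (t\<^sup>2 - t) / 2" "(t\<^sup>2 - t) / 2 \<le> 0"
    by (auto simp: power2_eq_square)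
  show "1 \<le> a powr ((t\<^sup>2 - t) / 2)"
    using powr_mono'[OF e(2), of a] assms by simp
  show "a powr ((t\<^sup>2 - t) / 2) \<le> 1 / a"
    using powr_mono'[OF e(1), of a] assms by (simp add: powr_minus_divide)
qed


text \<open>In the application y = z p^(-\<alpha>), \<rho> = |z|, K = k\<alpha> and n = \<lceil>K\<rceil>.\<close>

context
  fixes q y :: complex and M \<epsilon> K \<rho> :: real and R n :: nat
  assumes q: "0 < norm q" "norm q < 1"
    and M: "0 < M" and R: "M * norm q ^ R \<le> 1/2"
    and \<epsilon>: "0 < \<epsilon>" and sep: "\<And>i. \<epsilon> \<le> norm (1 - y * q ^ i)"
    and n: "K \<le> n" "n < K + 1"
    and y: "norm y = \<rho> * norm q powr (-K)" and \<rho>: "1/M < \<rho>" "\<rho> < M"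
begin

private lemma radius_pos: "0 < \<rho>"
  using M \<rho> by (smt (verit) divide_pos_pos)

lemma norm_mult_q_power_eq: "norm (y * q ^ i) = \<rho> * norm q powr (real i - K)"
  using q by (simp add: norm_mult norm_power y powr_diff powr_minus powr_realpow divide_inverse)

lemma qpoch_tail_prod_bounds:
  shows "exp (-2 * M / (1 - norm q)) * min 1 \<epsilon> ^ R \<le> (\<Prod>i\<in>{n..m}. norm (1 - y * q ^ i))"
    and "(\<Prod>i\<in>{n..m}. norm (1 - y * q ^ i)) \<le> exp (M / (1 - norm q))"
proof -
  have v: "norm (y * q ^ i) \<le> M * norm q ^ (i - n)" if "i \<in> {n..m}" for i
  proof -
    have "norm q powr (real i - K) \<le> norm q powr real (i - n)"
      using that n q by (intro powr_mono') (auto simp: of_nat_diff)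
    then show ?thesis
      using \<rho> radius_pos q by (simp add: norm_mult_q_power_eq powr_realpow) (intro mult_mono; simp)
  qed
  have inj: "inj_on (\<lambda>i. i - n) {n..m}"
    by (auto simp: inj_on_def)
  show "exp (-2 * M / (1 - norm q)) * min 1 \<epsilon> ^ R \<le> (\<Prod>i\<in>{n..m}. norm (1 - y * q ^ i))"
    using q M \<epsilon> R v sep by (intro prod_norm_one_minus_ge[OF _ _ _ _ inj]) (auto intro: min.coboundedI2)
  show "(\<Prod>i\<in>{n..m}. norm (1 - y * q ^ i)) \<le> exp (M / (1 - norm q))"
    using q M v by (intro prod_norm_one_minus_le_exp[OF _ _ _ _ inj]) auto
qed

lemma qpoch_head_inverse_prod_bounds:
  shows "exp (-2 * M / (1 - norm q)) * min 1 (\<epsilon> * norm q ^ R / M) ^ R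
           \<le> (\<Prod>i<n. norm (1 - inverse (y * q ^ i)))"
    and "(\<Prod>i<n. norm (1 - inverse (y * q ^ i))) \<le> exp (M / (1 - norm q))"
proof -
  have v: "norm (inverse (y * q ^ i)) \<le> M * norm q ^ (n - 1 - i)" if "i \<in> {..<n}" for i
  proof -
    have "norm q powr (K - real i) \<le> norm q powr real (n - 1 - i)"
      using that n q by (intro powr_mono') (auto simp: of_nat_diff)
    moreover have "inverse \<rho> \<le> M"
      using \<rho> M radius_pos by (simp add: field_simps)
    ultimately have "inverse \<rho> * norm q powr (K - real i) \<le> M * norm q ^ (n - 1 - i)"
      using q M by (simp add: powr_realpow) (intro mult_mono; simp)
    moreover have "norm (inverse (y * q ^ i)) = inverse \<rho> * norm q powr (K - real i)"
      by (simp only: norm_inverse norm_mult_q_power_eq)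
        (simp only: inverse_mult_distrib powr_minus[symmetric] minus_diff_eq)
    ultimately show ?thesis
      by simp
  qed
  have sep': "min 1 (\<epsilon> * norm q ^ R / M) \<le> norm (1 - inverse (y * q ^ i))"
    if "i \<in> {..<n}" "n - 1 - i < R" for i
  proof -
    have "norm q powr (real i - K) \<le> norm q powr (- real R)"
      using that n q by (intro powr_mono') auto
    then have "norm (y * q ^ i) \<le> M / norm q ^ R"
      using \<rho> radius_pos q by (simp add: norm_mult_q_power_eq powr_minus powr_realpow divide_inverse)
        (intro mult_mono; simp)
    moreover have yq: "0 < norm (y * q ^ i)"
      using radius_pos q by (simp add: norm_mult_q_power_eq)
    ultimately have "\<epsilon> * norm q ^ R / M \<le> \<epsilon> / norm (y * q ^ i)"
      using \<epsilon> M q by (simp add: field_simps)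
    also have "\<dots> \<le> norm (1 - y * q ^ i) / norm (y * q ^ i)"
      using sep yq by (intro divide_right_mono) auto
    also have "\<dots> = norm (1 - inverse (y * q ^ i))"
      using yq by (simp add: norm_one_minus_eq_norm_mult_norm_one_minus_inverse[of "y * q ^ i"])
    finally show ?thesis
      by (simp add: min.coboundedI2)
  qed
  have inj: "inj_on (\<lambda>i. n - 1 - i) {..<n}"
    by (auto simp: inj_on_def)
  have "0 < \<epsilon> * norm q ^ R / M"
    using \<epsilon> q M by simp
  then show "exp (-2 * M / (1 - norm q)) * min 1 (\<epsilon> * norm q ^ R / M) ^ R
           \<le> (\<Prod>i<n. norm (1 - inverse (y * q ^ i)))"
    using q M R v sep' by (intro prod_norm_one_minus_ge[OF _ _ _ _ inj]) auto
  show "(\<Prod>i<n. norm (1 - inverse (y * q ^ i))) \<le> exp (M / (1 - norm q))"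
    using q M v by (intro prod_norm_one_minus_le_exp[OF _ _ _ _ inj]) auto
qed

lemma qpoch_head_monomial_eq:
  "(\<Prod>i<n. norm (y * q ^ i)) * (\<rho> powr (-K) * norm q powr binom2 (K + 1))
     = \<rho> powr (n - K) * norm q powr (((n - K)\<^sup>2 - (n - K)) / 2)"
proof -
  have "(\<Prod>i<n. norm (y * q ^ i)) = \<rho> ^ n * (\<Prod>i<n. norm q powr (real i - K))"
    by (simp add: norm_mult_q_power_eq prod.distrib)
  also have "(\<Prod>i<n. norm q powr (real i - K)) = norm q powr (\<Sum>i<n. real i - K)"
    using q by (simp add: powr_sum)
  also have "(\<Sum>i<n. real i - K) = real n * (real n - 1) / 2 - n * K"
    by (induction n) (auto simp: field_simps)
  also have "\<rho> ^ n = \<rho> powr n"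
    using radius_pos by (simp add: powr_realpow)
  finally have "(\<Prod>i<n. norm (y * q ^ i)) * (\<rho> powr (-K) * norm q powr binom2 (K + 1))
      = (\<rho> powr n * \<rho> powr (-K))
        * (norm q powr (real n * (real n - 1) / 2 - n * K) * norm q powr binom2 (K + 1))"
    by (simp add: ac_simps)
  also have "\<dots> = \<rho> powr (n - K) * norm q powr (real n * (real n - 1) / 2 - n * K + binom2 (K + 1))"
    by (simp add: powr_add[symmetric])
  also have "real n * (real n - 1) / 2 - n * K + binom2 (K + 1) = ((n - K)\<^sup>2 - (n - K)) / 2"
    by (simp add: binom2_def power2_eq_square field_simps)
  finally show ?thesis .
qed

lemma norm_qpoch_normalised_bounds:
  defines "e \<equiv> exp (-2 * M / (1 - norm q))" and "E \<equiv> exp (M / (1 - norm q))"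
  shows "e\<^sup>2 * min 1 (\<epsilon> * norm q ^ R / M) ^ R * min 1 \<epsilon> ^ R * min 1 (1 / M)
           \<le> norm (qpoch y q) * \<rho> powr (-K) * norm q powr binom2 (K + 1)"
    and "norm (qpoch y q) * \<rho> powr (-K) * norm q powr binom2 (K + 1) \<le> E\<^sup>2 * (max 1 M / norm q)"
proof -
  define H where "H = (\<Prod>i<n. norm (1 - inverse (y * q ^ i)))"
  define U where "U = (\<Prod>i<n. norm (y * q ^ i))"
  define W where "W = \<rho> powr (-K) * norm q powr binom2 (K + 1)"
  define t where "t = real n - K"
  have t: "0 \<le> t" "t \<le> 1"
    using n by (auto simp: t_def)
  have "y * q ^ i \<noteq> 0" for i
    using radius_pos q norm_mult_q_power_eq[of i] by auto
  then have head: "(\<Prod>i<n. norm (1 - y * q ^ i)) = U * H"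
    unfolding U_def H_def prod.distrib[symmetric]
    by (intro prod.cong refl norm_one_minus_eq_norm_mult_norm_one_minus_inverse)
  have "e * min 1 \<epsilon> ^ R \<le> (\<Prod>i\<in>{n..m}. norm (1 - y * q ^ i))
      \<and> (\<Prod>i\<in>{n..m}. norm (1 - y * q ^ i)) \<le> E" if "n \<le> m" for m
    using qpoch_tail_prod_bounds unfolding e_def E_def by blast
  note Q = norm_qpoch_bounds_of_tail_bounds[OF q(2) this, unfolded head]
  have Hb: "e * min 1 (\<epsilon> * norm q ^ R / M) ^ R \<le> H" "H \<le> E"
    using qpoch_head_inverse_prod_bounds by (auto simp: e_def E_def H_def)
  have UW: "U * W = \<rho> powr t * norm q powr ((t\<^sup>2 - t) / 2)"
    using qpoch_head_monomial_eq by (simp add: U_def W_def t_def)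
  have pt: "min 1 \<rho> \<le> \<rho> powr t" "\<rho> powr t \<le> max 1 \<rho>"
    using powr_between_one_and_base[OF radius_pos t] .
  have qt: "1 \<le> norm q powr ((t\<^sup>2 - t) / 2)" "norm q powr ((t\<^sup>2 - t) / 2) \<le> 1 / norm q"
    using powr_quadratic_exponent_bounds[OF q t] .
  have "min 1 (1 / M) \<le> \<rho> powr t * 1"
    using pt(1) \<rho> by linarith
  also have "\<dots> \<le> \<rho> powr t * norm q powr ((t\<^sup>2 - t) / 2)"
    using qt(1) by (intro mult_left_mono) auto
  finally have UW_ge: "min 1 (1 / M) \<le> U * W"
    unfolding UW .
  have "\<rho> powr t * norm q powr ((t\<^sup>2 - t) / 2) \<le> max 1 M * (1 / norm q)"
    using pt(2) qt(2) \<rho> by (intro mult_mono) auto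
  then have UW_le: "U * W \<le> max 1 M / norm q"
    unfolding UW by simp
  have W: "0 \<le> W" and H: "0 \<le> H" and U: "0 \<le> U"
    by (auto simp: W_def H_def U_def prod_nonneg)
  have "e\<^sup>2 * min 1 (\<epsilon> * norm q ^ R / M) ^ R * min 1 \<epsilon> ^ R * min 1 (1 / M)
      = (e * min 1 (\<epsilon> * norm q ^ R / M) ^ R) * (e * min 1 \<epsilon> ^ R) * min 1 (1 / M)"
    by (simp add: power2_eq_square ac_simps)
  also have "\<dots> \<le> H * (e * min 1 \<epsilon> ^ R) * (U * W)"
    using Hb UW_ge H \<epsilon> M by (intro mult_mono) (auto simp: e_def)
  also have "\<dots> = (U * H * (e * min 1 \<epsilon> ^ R)) * W"
    by (simp add: ac_simps)
  also have "\<dots> \<le> norm (qpoch y q) * W"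
    using Q W by (intro mult_right_mono)
  finally show "e\<^sup>2 * min 1 (\<epsilon> * norm q ^ R / M) ^ R * min 1 \<epsilon> ^ R * min 1 (1 / M)
      \<le> norm (qpoch y q) * \<rho> powr (-K) * norm q powr binom2 (K + 1)"
    by (simp add: W_def mult.assoc)
  have "norm (qpoch y q) * W \<le> U * H * E * W"
    using Q W by (intro mult_right_mono)
  also have "\<dots> = (H * E) * (U * W)"
    by (simp add: ac_simps)
  also have "\<dots> \<le> (E * E) * (max 1 M / norm q)"
    using Hb UW_le H U W by (intro mult_mono mult_right_mono) (auto simp: E_def)
  also have "\<dots> = E\<^sup>2 * (max 1 M / norm q)"
    by (simp add: power2_eq_square)
  finally show "norm (qpoch y q) * \<rho> powr (-K) * norm q powr binom2 (K + 1) \<le> E\<^sup>2 * (max 1 M / norm q)"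
    by (simp add: W_def mult.assoc)
qed

end

lemma norm_mult_powr_of_norm_eq_1:
  fixes x q :: complex and k :: real
  assumes "norm x = 1"
  shows "norm (x * q powr k) = norm q powr k"
  using assms by (simp add: norm_mult norm_powr_real_powr')

lemma one_less_of_powr_less_base:
  fixes a k :: real
  assumes "0 < a" "a < 1" "a powr k < a"
  shows "1 < k"
proof (rule ccontr)
  assume "\<not> 1 < k"
  then have "a powr 1 \<le> a powr k"
    using assms by (intro powr_mono') auto
  with assms show False
    by simp
qed

lemma norm_one_minus_gt_of_zeroset:
  fixes p q z :: complex and \<alpha> \<epsilon> :: real
  assumes "p \<noteq> 0" "q \<noteq> 0" "norm q < 1"
    and sep: "\<forall>w\<in>zeroset p \<alpha> q. \<epsilon> < norm (1 - z / w)"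
  shows "\<epsilon> < norm (1 - z * p powr (-\<alpha>) * q ^ r)"
proof -
  define w where "w = p powr \<alpha> / q ^ r"
  have p\<alpha>: "p powr \<alpha> \<noteq> 0"
    using assms by simp
  then have "qpoch (w * p powr (-\<alpha>)) q = 0"
    using assms by (intro qpoch_eq_0[of q _ r]) (auto simp: w_def powr_minus)
  then have "w \<in> zeroset p \<alpha> q"
    using p\<alpha> assms by (simp add: zeroset_def w_def)
  moreover have "z / w = z * p powr (-\<alpha>) * q ^ r"
    using p\<alpha> assms by (simp add: w_def powr_minus field_simps)
  ultimately show ?thesis
    using sep by fastforce
qed

theorem lemmaA3:
  fixes M \<alpha> \<epsilon> :: real and q :: complex
  assumes "M > 0" and "\<alpha> > 0" and "norm q < 1" and "\<epsilon> > 0"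
  shows "\<exists>C1 C2. C1 > 0 \<and> C2 > 0 \<and>
    (\<forall>p::complex. \<forall>x::complex. \<forall>k::real.
       p \<noteq> 0 \<and> norm p < norm q \<and> norm x = 1 \<and> p = x * q powr k \<longrightarrow>
       (\<forall>z::complex. 1 / M < norm z \<and> norm z < M \<and>
          (\<forall>w\<in>zeroset p \<alpha> q. norm (1 - z / w) > \<epsilon>) \<longrightarrow>
          C1 \<le> norm (qpoch (z * p powr (-\<alpha>)) q) * norm z powr (- k * \<alpha>)
                 * norm q powr binom2 (k * \<alpha> + 1)
        \<and> norm (qpoch (z * p powr (-\<alpha>)) q) * norm z powr (- k * \<alpha>)
                 * norm q powr binom2 (k * \<alpha> + 1) \<le> C2))"
proof (cases "q = 0")
  case True
  then show ?thesis
    by (intro exI[of _ 1]) simp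
next
  case False
  obtain R where "norm q ^ R < 1 / (2 * M)"
    using real_arch_pow_inv[of "1 / (2 * M)" "norm q"] assms by auto
  then have R: "M * norm q ^ R \<le> 1/2"
    using assms by (simp add: field_simps)
  define C1 where "C1 = (exp (-2 * M / (1 - norm q)))\<^sup>2 * min 1 (\<epsilon> * norm q ^ R / M) ^ R
    * min 1 \<epsilon> ^ R * min 1 (1 / M)"
  define C2 where "C2 = (exp (M / (1 - norm q)))\<^sup>2 * (max 1 M / norm q)"
  show ?thesis
  proof (rule exI[of _ C1], rule exI[of _ C2], intro conjI allI impI)
    fix p x :: complex and k :: real and z :: complex
    assume p: "p \<noteq> 0 \<and> norm p < norm q \<and> norm x = 1 \<and> p = x * q powr k"
      and z: "1 / M < norm z \<and> norm z < M \<and> (\<forall>w\<in>zeroset p \<alpha> q. \<epsilon> < norm (1 - z / w))"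
    have "1 < k"
      using p False assms norm_mult_powr_of_norm_eq_1[of x q k]
      by (intro one_less_of_powr_less_base[of "norm q"]) auto
    then have "0 < k * \<alpha>"
      using assms by simp
    then have n: "k * \<alpha> \<le> nat \<lceil>k * \<alpha>\<rceil>" "nat \<lceil>k * \<alpha>\<rceil> < k * \<alpha> + 1"
      by linarith+
    have y: "norm (z * p powr (-\<alpha>)) = norm z * norm q powr (- (k * \<alpha>))"
      using p norm_mult_powr_of_norm_eq_1[of x q k]
      by (simp add: norm_mult norm_powr_real_powr' powr_powr)
    have "\<epsilon> \<le> norm (1 - z * p powr (-\<alpha>) * q ^ i)" for i
      using p z False assms by (intro less_imp_le norm_one_minus_gt_of_zeroset) auto
    note bounds = norm_qpoch_normalised_bounds[OF _ assms(3,1) R assms(4) this n y]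
    show "C1 \<le> norm (qpoch (z * p powr (-\<alpha>)) q) * norm z powr (- k * \<alpha>) * norm q powr binom2 (k * \<alpha> + 1)"
      using bounds(1) z False unfolding C1_def by simp
    show "norm (qpoch (z * p powr (-\<alpha>)) q) * norm z powr (- k * \<alpha>) * norm q powr binom2 (k * \<alpha> + 1) \<le> C2"
      using bounds(2) z False unfolding C2_def by simp
  qed (use False assms in \<open>auto simp: C1_def C2_def\<close>)
qed

end
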